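(* Let $A=(a_{ij}), B=(b_{ij})\in\mathbb{R}^{n\times n}_+$ be extended Leslie matrices, i.e. entrywise nonnegative matrices whose only possibly nonzero entries are those in the first row, the subdiagonal entries $(i,i-1)$ for $2\le i\le n$, and the $(n,n)$ entry. Define $m_{i,i-1}=\max\{a_{i,i-1},b_{i,i-1}\}$ for $2\le i\le n$ and $m_{nn}=\max\{a_{nn},b_{nn}\}$. Let $S_1$ be the matrix whose first row equals the first row of $A$, whose $(i,i-1)$ entries are $m_{i,i-1}$ for $2\le i\le n$, whose $(n,n)$ entry is $m_{nn}$, and all other entries zero; let $S_2$ be defined identically but with first row equal to the first row of $B$. Assume $S_1$ and $S_2$ are both Schur-stable. Let $\mathcal{L}_{A,B}$ be the set of entrywise nonnegative matrices $D\in\mathbb{R}^{n\times n}$ whose only possibly nonzero entries are the subdiagonal entries $d_{i,i-1}$ ($2\le i\le n$) and the entry $d_{nn}$, and such that $A-D\ge 0$ and $B-D\ge 0$ entrywise. Then for every $D\in\mathcal{L}_{A,B}$ the matrix $$M=\begin{pmatrix} A-D & D\\ D & B-D\end{pmatrix}$$ is Schur-stable.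
   Context: A real square matrix is Schur-stable if its spectral radius is strictly less than $1$. $\mathbb{R}^{n\times n}_+$ denotes the set of entrywise nonnegative $n\times n$ real matrices; inequalities between matrices are entrywise. *)

theory Defs
  imports "Jordan_Normal_Form.Spectral_Radius"
begin

text \<open>Matrices are Jordan_Normal_Form matrices with 0-based indices:
  paper entry (i,j) corresponds to index (i-1,j-1).\<close>

definition schur_stable :: "real mat \<Rightarrow> bool" where
  "schur_stable A \<longleftrightarrow> spectral_radius (map_mat complex_of_real A) < 1"

definition nonneg_mat :: "real mat \<Rightarrow> bool" where
  "nonneg_mat A \<longleftrightarrow> (\<forall>i < dim_row A. \<forall>j < dim_col A. A $$ (i,j) \<ge> 0)"

definition ext_leslie :: "nat \<Rightarrow> real mat \<Rightarrow> bool" where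
  "ext_leslie n A \<longleftrightarrow> A \<in> carrier_mat n n \<and> nonneg_mat A \<and>
     (\<forall>i < n. \<forall>j < n. A $$ (i,j) \<noteq> 0 \<longrightarrow> i = 0 \<or> i = j + 1 \<or> (i = n - 1 \<and> j = n - 1))"

definition leslie_max :: "nat \<Rightarrow> real mat \<Rightarrow> real mat \<Rightarrow> real mat \<Rightarrow> real mat" where
  "leslie_max n F A B = mat n n (\<lambda>(i,j).
     if i = 0 then F $$ (0,j)
     else if i = j + 1 \<or> (i = n - 1 \<and> j = n - 1) then max (A $$ (i,j)) (B $$ (i,j))
     else 0)"

definition L_set :: "nat \<Rightarrow> real mat \<Rightarrow> real mat \<Rightarrow> real mat set" where
  "L_set n A B = {D. D \<in> carrier_mat n n \<and> nonneg_mat D \<and>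
     (\<forall>i < n. \<forall>j < n. D $$ (i,j) \<noteq> 0 \<longrightarrow> i = j + 1 \<or> (i = n - 1 \<and> j = n - 1)) \<and>
     nonneg_mat (A - D) \<and> nonneg_mat (B - D)}"

end

theory Submission
  imports Defs
begin

(* If the block matrix M is not Schur-stable, the moduli of the entries of an eigenvector for an
   eigenvalue of maximal modulus form a nonzero nonnegative vector a with a <= M a.  Folding its
   halves u, w into p = max u w gives u <= A p and w <= B p, because A - D and D are nonnegative
   and add up to A (and likewise for B).  Below the first row, the rows of A and B are dominated
   by those of S_1 and S_2; in the first row, p_1 is u_1 or w_1.  Hence p <= S p for S = S_1 or
   S = S_2.  But a nonnegative Schur-stable S has no such vector: iterating gives p <= S^k p,
   while the entries of S^k decay geometrically. *)

lemma nonneg_matD: "nonneg_mat A \<Longrightarrow> i < dim_row A \<Longrightarrow> j < dim_col A \<Longrightarrow> 0 \<le> A $$ (i,j)"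
  unfolding nonneg_mat_def by blast

lemma nonneg_mat_mult:
  assumes "nonneg_mat A" and "nonneg_mat B" and "dim_col A = dim_row B"
  shows "nonneg_mat (A * B)"
  using assms unfolding nonneg_mat_def
  by (auto simp: scalar_prod_def intro!: sum_nonneg mult_nonneg_nonneg)

lemma nonneg_mat_pow:
  assumes "A \<in> carrier_mat n n" and "nonneg_mat A"
  shows "nonneg_mat (A ^\<^sub>m k)"
proof (induction k)
  case (Suc k)
  then show ?case using assms by (simp add: nonneg_mat_mult)
qed (auto simp: nonneg_mat_def)

lemma nonneg_mat_mult_mat_vec_mono:
  assumes "A \<in> carrier_mat m n" and "nonneg_mat A" and "u \<le> v" and "v \<in> carrier_vec n"
  shows "A *\<^sub>v u \<le> A *\<^sub>v v"
  using assms unfolding less_eq_vec_def nonneg_mat_def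
  by (auto simp: scalar_prod_def intro!: sum_mono mult_left_mono)

lemma smult_mat_mult_mat_vec:
  assumes "A \<in> carrier_mat m n" and "v \<in> carrier_vec n"
  shows "(c \<cdot>\<^sub>m A) *\<^sub>v v = (c :: 'a :: comm_semiring_0) \<cdot>\<^sub>v (A *\<^sub>v v)"
  using assms by (intro eq_vecI) (auto simp: scalar_prod_def sum_distrib_left mult.assoc)

lemma pow_mat_smult:
  assumes "A \<in> carrier_mat n n"
  shows "(c \<cdot>\<^sub>m A) ^\<^sub>m k = (c :: 'a :: comm_semiring_1) ^ k \<cdot>\<^sub>m A ^\<^sub>m k"
proof (induction k)
  case 0
  show ?case using assms by auto
next
  case (Suc k)
  then show ?case
    using assms
    by (intro eq_matI) (auto simp: mult_smult_assoc_mat[of _ n n] mult_smult_distrib[of _ n n] mult.assoc)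
qed

lemma eigenvector_smult_mat:
  assumes A: "A \<in> carrier_mat n n" and ev: "eigenvector (c \<cdot>\<^sub>m A) v ev" and c: "c \<noteq> 0"
  shows "eigenvector A v (ev / (c :: 'a :: field))"
proof -
  have v: "v \<in> carrier_vec n" and "c \<cdot>\<^sub>v (A *\<^sub>v v) = ev \<cdot>\<^sub>v v"
    using A ev by (auto simp: eigenvector_def smult_mat_mult_mat_vec)
  then have "A *\<^sub>v v = (ev / c) \<cdot>\<^sub>v v"
    using c by (metis (no_types) smult_smult_assoc divide_inverse_commute
        field_class.field_inverse mult.commute one_smult_vec)
  then show ?thesis using A ev by (simp add: eigenvector_def)
qed

lemma spectral_radius_smult_mat_le:
  assumes A: "A \<in> carrier_mat n n" and n: "n > 0" and c: "c \<noteq> 0"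
  shows "spectral_radius (c \<cdot>\<^sub>m A) \<le> cmod c * spectral_radius A"
proof -
  have cA: "c \<cdot>\<^sub>m A \<in> carrier_mat n n" using A by simp
  obtain ev where "ev \<in> spectrum (c \<cdot>\<^sub>m A)" and sr: "spectral_radius (c \<cdot>\<^sub>m A) = cmod ev"
    using spectral_radius_mem_max(1)[OF cA n] by auto
  then obtain v where "eigenvector (c \<cdot>\<^sub>m A) v ev"
    unfolding spectrum_def eigenvalue_def by auto
  then have "ev / c \<in> spectrum A"
    using eigenvector_smult_mat[OF A _ c] unfolding spectrum_def eigenvalue_def by auto
  then have "cmod ev / cmod c \<le> spectral_radius A"
    using spectral_radius_mem_max(2)[OF A n] by (metis imageI norm_divide)
  then show ?thesis using c sr by (simp add: field_simps)
qed

lemma spectral_radius_less_1_geometric_norm_bound: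
  assumes A: "A \<in> carrier_mat n n" and sr: "spectral_radius A < 1"
  obtains r c where "0 < r" and "r < 1" and "\<And>k. norm_bound (A ^\<^sub>m k) (c * r ^ k)"
proof (cases "n = 0")
  case True
  show ?thesis by (rule that[of "1/2" 0]) (use A True in \<open>auto simp: norm_bound_def\<close>)
next
  case False
  define \<rho> where "\<rho> = spectral_radius A"
  have "\<rho> \<ge> 0" using spectral_radius_mem_max(1)[OF A] False unfolding \<rho>_def by auto
  define r where "r = (1 + \<rho>) / 2"
  have r: "0 < r" "r < 1" "\<rho> < r" using \<open>\<rho> \<ge> 0\<close> sr unfolding r_def \<rho>_def by auto
  define B where "B = complex_of_real (1 / r) \<cdot>\<^sub>m A"
  have B: "B \<in> carrier_mat n n" using A by (simp add: B_def)
  have "spectral_radius B \<le> \<rho> / r"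
    using spectral_radius_smult_mat_le[OF A _, of "complex_of_real (1 / r)"] False r
    unfolding B_def \<rho>_def by (simp add: norm_divide)
  also have "\<dots> < 1" using r by simp
  finally obtain c where c: "\<And>k. norm_bound (B ^\<^sub>m k) c"
    using spectral_radius_jnf_norm_bound_less_1_upper_triangular[OF B] by auto
  have "A = complex_of_real r \<cdot>\<^sub>m B"
    using A r by (auto simp: B_def)
  then have Ak: "A ^\<^sub>m k = complex_of_real r ^ k \<cdot>\<^sub>m B ^\<^sub>m k" for k
    using pow_mat_smult[OF B] by simp
  show ?thesis
  proof (rule that[OF r(1,2)])
    fix k
    show "norm_bound (A ^\<^sub>m k) (c * r ^ k)"
      using c[of k] B r(1) unfolding norm_bound_def Ak
      by (auto simp: norm_mult norm_power mult.commute intro!: mult_left_mono)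
  qed
qed

lemma schur_stable_pow_decay:
  assumes S: "S \<in> carrier_mat n n" and "schur_stable S"
  obtains r c where "0 < r" and "r < 1"
    and "\<And>k i j. i < n \<Longrightarrow> j < n \<Longrightarrow> \<bar>(S ^\<^sub>m k) $$ (i,j)\<bar> \<le> c * r ^ k"
proof -
  have Sc: "map_mat complex_of_real S \<in> carrier_mat n n" using S by simp
  obtain r c where r: "0 < r" "r < 1"
    and bound: "\<And>k. norm_bound (map_mat complex_of_real S ^\<^sub>m k) (c * r ^ k)"
    using spectral_radius_less_1_geometric_norm_bound[OF Sc] \<open>schur_stable S\<close>
    unfolding schur_stable_def by blast
  show ?thesis
  proof (rule that[OF r])
    fix k i j assume ij: "i < n" "j < n"
    have "map_mat complex_of_real S ^\<^sub>m k = map_mat complex_of_real (S ^\<^sub>m k)"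
      by (rule of_real_hom.mat_hom_pow[OF S, symmetric])
    then show "\<bar>(S ^\<^sub>m k) $$ (i,j)\<bar> \<le> c * r ^ k"
      using bound[of k] ij S unfolding norm_bound_def by auto
  qed
qed

lemma schur_stable_nonneg_subinvariant_vec_eq_0:
  assumes S: "S \<in> carrier_mat n n" "nonneg_mat S" "schur_stable S"
    and p: "p \<in> carrier_vec n" "0\<^sub>v n \<le> p" "p \<le> S *\<^sub>v p"
  shows "p = 0\<^sub>v n"
proof -
  have iterate: "p \<le> S ^\<^sub>m k *\<^sub>v p" for k
  proof (induction k)
    case 0
    show ?case using S p by simp
  next
    case (Suc k)
    have "S ^\<^sub>m k *\<^sub>v p \<le> S ^\<^sub>m k *\<^sub>v (S *\<^sub>v p)"
      using S p by (intro nonneg_mat_mult_mat_vec_mono nonneg_mat_pow) auto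
    also have "\<dots> = S ^\<^sub>m Suc k *\<^sub>v p"
      using S p by (simp add: assoc_mult_mat_vec[of _ n n _ n])
    finally show ?case using Suc.IH by order
  qed
  obtain r c where r: "0 < r" "r < 1"
    and decay: "\<And>k i j. i < n \<Longrightarrow> j < n \<Longrightarrow> \<bar>(S ^\<^sub>m k) $$ (i,j)\<bar> \<le> c * r ^ k"
    using schur_stable_pow_decay[OF S(1,3)] by metis
  have p_nonneg: "0 \<le> p $ j" if "j < n" for j
    using p(2) that unfolding less_eq_vec_def by auto
  have p_nonpos: "p $ i \<le> 0" if i: "i < n" for i
  proof (rule LIMSEQ_le_const)
    show "(\<lambda>k. c * r ^ k * (\<Sum>j<n. p $ j)) \<longlonglongrightarrow> 0"
      using r by (intro tendsto_mult_left_zero tendsto_mult_right_zero LIMSEQ_power_zero) simp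
    have "p $ i \<le> c * r ^ k * (\<Sum>j<n. p $ j)" for k
    proof -
      have "p $ i \<le> (S ^\<^sub>m k *\<^sub>v p) $ i"
        using iterate[of k] i S unfolding less_eq_vec_def by auto
      also have "\<dots> = (\<Sum>j<n. (S ^\<^sub>m k) $$ (i,j) * p $ j)"
        using i S p by (simp add: scalar_prod_def atLeast0LessThan)
      also have "\<dots> \<le> (\<Sum>j<n. c * r ^ k * p $ j)"
      proof (intro sum_mono mult_right_mono)
        fix j assume "j \<in> {..<n}"
        then show "(S ^\<^sub>m k) $$ (i,j) \<le> c * r ^ k" and "0 \<le> p $ j"
          using decay[OF i, of j k] p_nonneg[of j] by auto
      qed
      finally show ?thesis by (simp add: sum_distrib_left)
    qed
    then show "\<exists>N. \<forall>k\<ge>N. p $ i \<le> c * r ^ k * (\<Sum>j<n. p $ j)" by blast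
  qed
  show ?thesis
  proof (rule eq_vecI)
    fix i assume "i < dim_vec (0\<^sub>v n)"
    then show "p $ i = 0\<^sub>v n $ i" using p_nonneg p_nonpos by (simp add: order.antisym)
  qed (use p in simp)
qed

lemma nonneg_subinvariant_vec_if_not_schur_stable:
  assumes M: "M \<in> carrier_mat n n" "nonneg_mat M" and n: "n > 0" and unstable: "\<not> schur_stable M"
  obtains a where "a \<in> carrier_vec n" and "0\<^sub>v n \<le> a" and "a \<noteq> 0\<^sub>v n" and "a \<le> M *\<^sub>v a"
proof -
  define Mc where "Mc = map_mat complex_of_real M"
  have Mc: "Mc \<in> carrier_mat n n" using M by (simp add: Mc_def)
  obtain ev where "ev \<in> spectrum Mc" and sr: "spectral_radius Mc = cmod ev"
    using spectral_radius_mem_max(1)[OF Mc n] by auto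
  then obtain z where "eigenvector Mc z ev"
    unfolding spectrum_def eigenvalue_def by auto
  then have z: "z \<in> carrier_vec n" "z \<noteq> 0\<^sub>v n" and Mz: "Mc *\<^sub>v z = ev \<cdot>\<^sub>v z"
    using Mc unfolding eigenvector_def by auto
  have ev: "1 \<le> cmod ev" using unstable sr by (simp add: schur_stable_def Mc_def)
  define a where "a = vec n (\<lambda>i. cmod (z $ i))"
  show ?thesis
  proof (rule that)
    show "a \<in> carrier_vec n" and "0\<^sub>v n \<le> a" by (auto simp: a_def less_eq_vec_def)
    show "a \<noteq> 0\<^sub>v n"
    proof
      assume "a = 0\<^sub>v n"
      then have "z $ i = 0" if "i < n" for i
        using that by (metis a_def index_vec index_zero_vec(1) norm_eq_zero)
      then show False using z by (metis eq_vecI carrier_vecD index_zero_vec)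
    qed
    have "a $ i \<le> (M *\<^sub>v a) $ i" if i: "i < n" for i
    proof -
      have "a $ i \<le> cmod ev * cmod (z $ i)" using ev i by (simp add: a_def mult_le_cancel_right1)
      also have "\<dots> = cmod (\<Sum>j<n. complex_of_real (M $$ (i,j)) * z $ j)"
        using arg_cong[OF Mz, of "\<lambda>v. v $ i"] i z M
        by (simp add: Mc_def scalar_prod_def atLeast0LessThan norm_mult)
      also have "\<dots> \<le> (\<Sum>j<n. M $$ (i,j) * cmod (z $ j))"
        using nonneg_matD[OF M(2)] i M
        by (auto simp: norm_mult intro!: order_trans[OF norm_sum] sum_mono)
      also have "\<dots> = (M *\<^sub>v a) $ i"
        using i M by (simp add: a_def scalar_prod_def atLeast0LessThan)
      finally show ?thesis .
    qed
    then show "a \<le> M *\<^sub>v a" using M by (simp add: a_def less_eq_vec_def)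
  qed
qed

lemma nonneg_mat_four_block_mat:
  assumes "A \<in> carrier_mat n n" "B \<in> carrier_mat n m" "C \<in> carrier_mat m n" "D \<in> carrier_mat m m"
    and "nonneg_mat A" "nonneg_mat B" "nonneg_mat C" "nonneg_mat D"
  shows "nonneg_mat (four_block_mat A B C D)"
  using assms unfolding nonneg_mat_def by auto

lemma add_vec_mono:
  fixes u v :: "'a :: ordered_ab_semigroup_add vec"
  shows "u \<le> u' \<Longrightarrow> v \<le> v' \<Longrightarrow> dim_vec u = dim_vec v \<Longrightarrow> u + v \<le> u' + v'"
  by (auto simp: less_eq_vec_def intro: add_mono)

lemma four_block_subinvariant_vec_max:
  fixes A B D :: "real mat"
  assumes carrier: "A \<in> carrier_mat n n" "B \<in> carrier_mat n n" "D \<in> carrier_mat n n"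
    and nonneg: "nonneg_mat D" "nonneg_mat (A - D)" "nonneg_mat (B - D)"
    and uw: "u \<in> carrier_vec n" "w \<in> carrier_vec n"
    and sub: "u @\<^sub>v w \<le> four_block_mat (A - D) D D (B - D) *\<^sub>v (u @\<^sub>v w)"
  defines "p \<equiv> vec n (\<lambda>i. max (u $ i) (w $ i))"
  shows "u \<le> A *\<^sub>v p" and "w \<le> B *\<^sub>v p"
proof -
  have AD: "A - D \<in> carrier_mat n n" and BD: "B - D \<in> carrier_mat n n" using carrier by auto
  have p: "p \<in> carrier_vec n" "u \<le> p" "w \<le> p"
    using uw by (auto simp: p_def less_eq_vec_def)
  have "u @\<^sub>v w \<le> ((A - D) *\<^sub>v u + D *\<^sub>v w) @\<^sub>v (D *\<^sub>v u + (B - D) *\<^sub>v w)"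
    using sub four_block_mat_mult_vec[OF AD carrier(3) carrier(3) BD uw] by simp
  moreover have "(A - D) *\<^sub>v u + D *\<^sub>v w \<in> carrier_vec n"
    using AD carrier uw by (intro add_carrier_vec) auto
  ultimately have blocks: "u \<le> (A - D) *\<^sub>v u + D *\<^sub>v w" "w \<le> D *\<^sub>v u + (B - D) *\<^sub>v w"
    using append_vec_le[OF uw(1)] by blast+
  have "(A - D) *\<^sub>v u + D *\<^sub>v w \<le> (A - D) *\<^sub>v p + D *\<^sub>v p"
    using AD carrier p nonneg by (intro add_vec_mono nonneg_mat_mult_mat_vec_mono) auto
  also have "\<dots> = A *\<^sub>v p"
    using carrier p by (intro eq_vecI) (auto simp: minus_mult_distrib_mat_vec)
  finally show "u \<le> A *\<^sub>v p" using blocks by order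
  have "D *\<^sub>v u + (B - D) *\<^sub>v w \<le> D *\<^sub>v p + (B - D) *\<^sub>v p"
    using BD carrier p nonneg by (intro add_vec_mono nonneg_mat_mult_mat_vec_mono) auto
  also have "\<dots> = B *\<^sub>v p"
    using carrier p by (intro eq_vecI) (auto simp: minus_mult_distrib_mat_vec)
  finally show "w \<le> B *\<^sub>v p" using blocks by order
qed

lemma four_block_subinvariant_vec_fold:
  fixes A B D :: "real mat"
  assumes carrier: "A \<in> carrier_mat n n" "B \<in> carrier_mat n n" "D \<in> carrier_mat n n"
    and nonneg: "nonneg_mat D" "nonneg_mat (A - D)" "nonneg_mat (B - D)"
    and a: "a \<in> carrier_vec (n + n)" "0\<^sub>v (n + n) \<le> a" "a \<noteq> 0\<^sub>v (n + n)"
      "a \<le> four_block_mat (A - D) D D (B - D) *\<^sub>v a"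
  obtains p where "p \<in> carrier_vec n" and "0\<^sub>v n \<le> p" and "p \<noteq> 0\<^sub>v n"
    and "\<And>i. i < n \<Longrightarrow> p $ i \<le> max ((A *\<^sub>v p) $ i) ((B *\<^sub>v p) $ i)"
proof -
  define u where "u = vec_first a n"
  define w where "w = vec_last a n"
  have uw: "u \<in> carrier_vec n" "w \<in> carrier_vec n" and split: "a = u @\<^sub>v w"
    using a(1) by (simp_all add: u_def w_def)
  define p where "p = vec n (\<lambda>i. max (u $ i) (w $ i))"
  have sub: "u \<le> A *\<^sub>v p" "w \<le> B *\<^sub>v p"
    using four_block_subinvariant_vec_max[OF carrier nonneg uw] a(4) split unfolding p_def by auto
  have zero_split: "0\<^sub>v (n + n) = 0\<^sub>v n @\<^sub>v 0\<^sub>v n" by (rule eq_vecI) auto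
  have nonneg: "0\<^sub>v n \<le> u" "0\<^sub>v n \<le> w"
    using a(2) append_vec_le[of "0\<^sub>v n" n u] uw unfolding split zero_split by auto
  have below: "u \<le> p" "w \<le> p" using uw by (auto simp: p_def less_eq_vec_def)
  show ?thesis
  proof (rule that)
    show "p \<in> carrier_vec n" by (simp add: p_def)
    show "0\<^sub>v n \<le> p" using nonneg below by order
    show "p \<noteq> 0\<^sub>v n"
    proof
      assume "p = 0\<^sub>v n"
      then have "u = 0\<^sub>v n" "w = 0\<^sub>v n" using nonneg below by (simp_all add: order.antisym)
      then show False using a(3) unfolding split zero_split by simp
    qed
    show "p $ i \<le> max ((A *\<^sub>v p) $ i) ((B *\<^sub>v p) $ i)" if "i < n" for i
      using sub that uw by (auto simp: p_def less_eq_vec_def)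
  qed
qed

lemma mult_mat_vec_index_mono:
  fixes A B :: "'a :: ordered_semiring_0 mat"
  assumes "A \<in> carrier_mat m n" "B \<in> carrier_mat m n" "i < m"
    and "\<And>j. j < n \<Longrightarrow> A $$ (i,j) \<le> B $$ (i,j)"
    and "p \<in> carrier_vec n" "0\<^sub>v n \<le> p"
  shows "(A *\<^sub>v p) $ i \<le> (B *\<^sub>v p) $ i"
  using assms by (auto simp: scalar_prod_def less_eq_vec_def intro!: sum_mono mult_right_mono)

lemma index_leslie_max:
  "i < n \<Longrightarrow> j < n \<Longrightarrow> leslie_max n F A B $$ (i,j) =
     (if i = 0 then F $$ (0,j)
      else if i = j + 1 \<or> (i = n - 1 \<and> j = n - 1) then max (A $$ (i,j)) (B $$ (i,j))
      else 0)"
  unfolding leslie_max_def by simp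

lemma dim_leslie_max[simp]:
  "dim_row (leslie_max n F A B) = n" "dim_col (leslie_max n F A B) = n"
  unfolding leslie_max_def by simp_all

lemma leslie_max_carrier: "leslie_max n F A B \<in> carrier_mat n n"
  by (simp add: carrier_matI)

lemma nonneg_mat_leslie_max:
  assumes "F \<in> carrier_mat n n" "nonneg_mat F" "ext_leslie n A" "ext_leslie n B"
  shows "nonneg_mat (leslie_max n F A B)"
  using assms unfolding nonneg_mat_def ext_leslie_def leslie_max_def
  by (auto simp: le_max_iff_disj)

lemma ext_leslie_le_leslie_max:
  assumes "ext_leslie n A" "ext_leslie n B" "0 < i" "i < n" "j < n"
  shows "A $$ (i,j) \<le> leslie_max n F A B $$ (i,j)" and "B $$ (i,j) \<le> leslie_max n F A B $$ (i,j)"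
proof -
  have "A $$ (i,j) = 0 \<and> B $$ (i,j) = 0" if "\<not> (i = j + 1 \<or> (i = n - 1 \<and> j = n - 1))"
    using assms that unfolding ext_leslie_def by auto
  then show "A $$ (i,j) \<le> leslie_max n F A B $$ (i,j)" "B $$ (i,j) \<le> leslie_max n F A B $$ (i,j)"
    using assms by (auto simp: index_leslie_max)
qed

lemma leslie_max_subinvariant_vec:
  assumes A: "ext_leslie n A" and B: "ext_leslie n B" and F: "F \<in> carrier_mat n n"
    and p: "p \<in> carrier_vec n" "0\<^sub>v n \<le> p"
    and rows: "\<And>i. i < n \<Longrightarrow> p $ i \<le> max ((A *\<^sub>v p) $ i) ((B *\<^sub>v p) $ i)"
    and row0: "p $ 0 \<le> (F *\<^sub>v p) $ 0"
  shows "p \<le> leslie_max n F A B *\<^sub>v p"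
proof -
  have "p $ i \<le> (leslie_max n F A B *\<^sub>v p) $ i" if i: "i < n" for i
  proof (cases "i = 0")
    case True
    have "(leslie_max n F A B *\<^sub>v p) $ 0 = (F *\<^sub>v p) $ 0"
      using i True F p by (simp add: leslie_max_def scalar_prod_def)
    then show ?thesis using row0 True by simp
  next
    case False
    have AB: "A \<in> carrier_mat n n" "B \<in> carrier_mat n n"
      using A B by (simp_all add: ext_leslie_def)
    have "(A *\<^sub>v p) $ i \<le> (leslie_max n F A B *\<^sub>v p) $ i"
      and "(B *\<^sub>v p) $ i \<le> (leslie_max n F A B *\<^sub>v p) $ i"
      using False ext_leslie_le_leslie_max[OF A B _ i]
      by (intro mult_mat_vec_index_mono[OF AB(1) leslie_max_carrier i _ p]
          mult_mat_vec_index_mono[OF AB(2) leslie_max_carrier i _ p]; simp)+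
    then show ?thesis using rows[OF i] by simp
  qed
  then show ?thesis using p by (simp add: less_eq_vec_def)
qed

theorem proposition1:
  fixes n :: nat and A B D :: "real mat"
  assumes "n \<ge> 1"
    and "ext_leslie n A" and "ext_leslie n B"
    and "schur_stable (leslie_max n A A B)"
    and "schur_stable (leslie_max n B A B)"
    and "D \<in> L_set n A B"
  shows "schur_stable (four_block_mat (A - D) D D (B - D))"
proof (rule ccontr)
  assume unstable: "\<not> ?thesis"
  have A: "A \<in> carrier_mat n n" "nonneg_mat A" and B: "B \<in> carrier_mat n n" "nonneg_mat B"
    using assms(2,3) by (simp_all add: ext_leslie_def)
  have D: "D \<in> carrier_mat n n" "nonneg_mat D" "nonneg_mat (A - D)" "nonneg_mat (B - D)"
    using assms(6) by (simp_all add: L_set_def)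
  have M: "four_block_mat (A - D) D D (B - D) \<in> carrier_mat (n + n) (n + n)"
    using A B D by auto
  have "nonneg_mat (four_block_mat (A - D) D D (B - D))"
    using A B D by (intro nonneg_mat_four_block_mat) auto
  then obtain a where a: "a \<in> carrier_vec (n + n)" "0\<^sub>v (n + n) \<le> a" "a \<noteq> 0\<^sub>v (n + n)"
      "a \<le> four_block_mat (A - D) D D (B - D) *\<^sub>v a"
    using nonneg_subinvariant_vec_if_not_schur_stable[OF M _ _ unstable] assms(1) by auto
  obtain p where p: "p \<in> carrier_vec n" "0\<^sub>v n \<le> p" "p \<noteq> 0\<^sub>v n"
    and rows: "\<And>i. i < n \<Longrightarrow> p $ i \<le> max ((A *\<^sub>v p) $ i) ((B *\<^sub>v p) $ i)"
    using four_block_subinvariant_vec_fold[OF A(1) B(1) D a] by metis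
  have "p = 0\<^sub>v n"
    if F: "F \<in> carrier_mat n n" "nonneg_mat F" "schur_stable (leslie_max n F A B)"
      and row0: "p $ 0 \<le> (F *\<^sub>v p) $ 0" for F
    using leslie_max_subinvariant_vec[OF assms(2,3) F(1) p(1,2) rows row0]
    by (rule schur_stable_nonneg_subinvariant_vec_eq_0[OF leslie_max_carrier
          nonneg_mat_leslie_max[OF F(1,2) assms(2,3)] F(3) p(1,2)])
  moreover have "p $ 0 \<le> (A *\<^sub>v p) $ 0 \<or> p $ 0 \<le> (B *\<^sub>v p) $ 0"
    using rows[of 0] assms(1) by linarith
  ultimately show False
    using A B assms(4,5) p(3) by blast
qed

end
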